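(* For every $n\ge1$ there is a bijection $S\mapsto M$ from the set of signatures in $[2n]$ onto the set of Motzkin paths of length $n$ such that the weight of $S$, namely $\big(\prod_{i=1}^{2n}s(i)\big)t^{|S|/2}$, equals the weight $\rho(M)$ of $M$, where $\rho(M)$ is the product of its step weights: an up step at height $h\ge0$ has weight $(h+1)(h+2)t$, a level step at height $h\ge0$ has weight $(h+1)^2$, and a down step at height $h\ge1$ has weight $(h+1)h$.
   Context: A signature in $[2n]$ is a set $S\subseteq[2n]$ such that: (i) $S$ has $k$ odd and $k$ even elements for some $k\ge0$; (ii) for each $j\in[n]$ at most one of $2j-1,2j$ lies in $S$; (iii) for every $i\in[2n]$, $S\cap\{1,\dots,i\}$ has at least as many odd as even elements. With $f(i)$ (resp. $g(i)$) the number of odd (resp. even) elements of $S$ less than $i$, its vector is $s(i)=f(i)-g(i)$ if $i\in S$ is even, and $s(i)=f(i)-g(i)+1$ otherwise. A Motzkin path of length $n$ is a lattice path from $(0,0)$ to $(n,0)$ staying weakly above the $x$-axis with steps up $(1,1)$, down $(1,-1)$ and level $(1,0)$; the height of a step is the $y$-coordinate of its starting point. *)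

theory Defs
  imports "HOL-Computational_Algebra.Polynomial"
begin

definition odd_below :: "nat set \<Rightarrow> nat \<Rightarrow> int" where
  "odd_below S i = int (card {x \<in> S. odd x \<and> x < i})"

definition even_below :: "nat set \<Rightarrow> nat \<Rightarrow> int" where
  "even_below S i = int (card {x \<in> S. even x \<and> x < i})"

definition is_signature :: "nat \<Rightarrow> nat set \<Rightarrow> bool" where
  "is_signature n S \<longleftrightarrow>
     S \<subseteq> {1..2*n} \<and>
     card {x \<in> S. odd x} = card {x \<in> S. even x} \<and>
     (\<forall>j \<in> {1..n}. \<not> (2*j - 1 \<in> S \<and> 2*j \<in> S)) \<and>
     (\<forall>i \<in> {1..2*n}. card {x \<in> S. even x \<and> x \<le> i} \<le> card {x \<in> S. odd x \<and> x \<le> i})"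

definition sig_vec :: "nat set \<Rightarrow> nat \<Rightarrow> int" where
  "sig_vec S i = (if i \<in> S \<and> even i then odd_below S i - even_below S i
                  else odd_below S i - even_below S i + 1)"

definition tvar :: "int poly" where "tvar = [:0, 1:]"

definition sig_weight :: "nat \<Rightarrow> nat set \<Rightarrow> int poly" where
  "sig_weight n S = smult (\<Prod>i\<in>{1..2*n}. sig_vec S i) (tvar ^ (card S div 2))"

datatype step = Up | Lvl | Dn

fun step_delta :: "step \<Rightarrow> int" where
  "step_delta Up = 1" | "step_delta Lvl = 0" | "step_delta Dn = -1"

text \<open>Height after the first k steps = height at the start of step k (0-indexed).\<close>
definition height :: "step list \<Rightarrow> nat \<Rightarrow> int" where
  "height M k = sum_list (map step_delta (take k M))"

definition is_motzkin :: "nat \<Rightarrow> step list \<Rightarrow> bool" where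
  "is_motzkin n M \<longleftrightarrow> length M = n \<and> (\<forall>k \<le> n. height M k \<ge> 0) \<and> height M n = 0"

fun step_weight :: "int \<Rightarrow> step \<Rightarrow> int poly" where
  "step_weight h Up = smult ((h+1)*(h+2)) tvar"
| "step_weight h Lvl = [:(h+1)^2:]"
| "step_weight h Dn = [:(h+1)*h:]"

definition rho :: "step list \<Rightarrow> int poly" where
  "rho M = (\<Prod>k<length M. step_weight (height M k) (M ! k))"

end

theory Submission
  imports Defs
begin

text \<open>
  Read a signature in pairs \<open>(2j+1, 2j+2)\<close>: the \<open>j\<close>-th step of the path is up if \<open>2j+1 \<in> S\<close>,
  down if \<open>2j+2 \<in> S\<close> and level otherwise. Then \<open>f - g\<close> at \<open>2j+1\<close> is the height \<open>h\<close> of the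
  \<open>j\<close>-th step, so \<open>s(2j+1) = h + 1\<close> and \<open>s(2j+2)\<close> is \<open>h + 2\<close>, \<open>h + 1\<close> or \<open>h\<close> for an up, level
  or down step; the product over a pair is the step weight, the prefix condition on \<open>S\<close> is
  nonnegativity of the path, and \<open>|S|/2\<close> is the number of up steps.
\<close>

definition steps_before :: "step \<Rightarrow> step list \<Rightarrow> nat \<Rightarrow> nat" where
  "steps_before a M k = card {j. j < length M \<and> M!j = a \<and> j < k}"

lemma steps_before_0 [simp]: "steps_before a M 0 = 0"
  by (simp add: steps_before_def)

lemma steps_before_Suc:
  "steps_before a M (Suc k) = steps_before a M k + (if k < length M \<and> M!k = a then 1 else 0)"
proof -
  have fin: "finite {j. j < length M \<and> M!j = a \<and> j < k}"
    by (rule finite_subset[of _ "{..<k}"]) auto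
  have "{j. j < length M \<and> M!j = a \<and> j < Suc k} =
        (if k < length M \<and> M!k = a then insert k else id) {j. j < length M \<and> M!j = a \<and> j < k}"
    by (auto simp: less_Suc_eq)
  then show ?thesis
    using fin by (simp add: steps_before_def)
qed

lemma steps_before_mono: "k \<le> k' \<Longrightarrow> steps_before a M k \<le> steps_before a M k'"
  unfolding steps_before_def
  by (rule card_mono[OF finite_subset[of _ "{..<k'}"]]) auto

lemma sum_indicator_Up: "(\<Sum>j<k. if j < length M \<and> M!j = Up then 1 else 0) = steps_before Up M k"
  by (induction k) (simp_all add: steps_before_Suc)

lemma height_eq_steps_before: "height M k = int (steps_before Up M k) - int (steps_before Dn M k)"
proof (induction k)
  case 0
  show ?case by (simp add: height_def)
next
  case (Suc k)
  show ?case
  proof (cases "k < length M")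
    case True
    then have "height M (Suc k) = height M k + step_delta (M!k)"
      by (simp add: height_def take_Suc_conv_app_nth)
    then show ?thesis
      using Suc.IH True by (cases "M!k") (simp_all add: steps_before_Suc)
  next
    case False
    then show ?thesis
      using Suc.IH by (simp add: height_def steps_before_Suc)
  qed
qed

definition signature_of_path :: "step list \<Rightarrow> nat set" where
  "signature_of_path M =
     {2*j+1 | j. j < length M \<and> M!j = Up} \<union> {2*j+2 | j. j < length M \<and> M!j = Dn}"

definition path_of_signature :: "nat \<Rightarrow> nat set \<Rightarrow> step list" where
  "path_of_signature n S =
     map (\<lambda>j. if 2*j+1 \<in> S then Up else if 2*j+2 \<in> S then Dn else Lvl) [0..<n]"

lemma odd_mem_signature_of_path:
  "2*j+1 \<in> signature_of_path M \<longleftrightarrow> j < length M \<and> M!j = Up"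
  unfolding signature_of_path_def by auto presburger

lemma even_mem_signature_of_path:
  "2*j+2 \<in> signature_of_path M \<longleftrightarrow> j < length M \<and> M!j = Dn"
  unfolding signature_of_path_def by auto presburger

lemmas mem_signature_of_path_Suc [simp] =
  odd_mem_signature_of_path[simplified] even_mem_signature_of_path[simplified]

lemma signature_of_path_subset: "signature_of_path M \<subseteq> {1..2 * length M}"
  unfolding signature_of_path_def by auto

lemma finite_signature_of_path: "finite (signature_of_path M)"
  using finite_subset[OF signature_of_path_subset] by blast

lemma card_odd_less_signature_of_path:
  "card {x \<in> signature_of_path M. odd x \<and> x < i} = steps_before Up M (i div 2)"
proof -
  have "{x \<in> signature_of_path M. odd x \<and> x < i} =
        (\<lambda>j. 2*j+1) ` {j. j < length M \<and> M!j = Up \<and> j < i div 2}"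
    unfolding signature_of_path_def by auto
  then show ?thesis
    unfolding steps_before_def by (simp add: card_image inj_on_def)
qed

lemma card_even_less_signature_of_path:
  "card {x \<in> signature_of_path M. even x \<and> x < i} = steps_before Dn M ((i - 1) div 2)"
proof -
  have "{x \<in> signature_of_path M. even x \<and> x < i} =
        (\<lambda>j. 2*j+2) ` {j. j < length M \<and> M!j = Dn \<and> j < (i - 1) div 2}"
    unfolding signature_of_path_def by auto
  then show ?thesis
    unfolding steps_before_def by (simp add: card_image inj_on_def)
qed

lemma card_odd_signature_of_path:
  "card {x \<in> signature_of_path M. odd x} = steps_before Up M (length M)"
proof -
  have "{x \<in> signature_of_path M. odd x} = {x \<in> signature_of_path M. odd x \<and> x < 2 * length M + 1}"
    using signature_of_path_subset[of M] by fastforce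
  then show ?thesis
    using card_odd_less_signature_of_path[of M "2 * length M + 1"] by simp
qed

lemma card_even_signature_of_path:
  "card {x \<in> signature_of_path M. even x} = steps_before Dn M (length M)"
proof -
  have "{x \<in> signature_of_path M. even x} = {x \<in> signature_of_path M. even x \<and> x < 2 * length M + 1}"
    using signature_of_path_subset[of M] by fastforce
  then show ?thesis
    using card_even_less_signature_of_path[of M "2 * length M + 1"] by simp
qed

lemma card_signature_of_path:
  "card (signature_of_path M) = steps_before Up M (length M) + steps_before Dn M (length M)"
proof -
  have "signature_of_path M = {x \<in> signature_of_path M. odd x} \<union> {x \<in> signature_of_path M. even x}"
    by auto
  then have "card (signature_of_path M) =
             card {x \<in> signature_of_path M. odd x} + card {x \<in> signature_of_path M. even x}"
    by (metis (no_types, lifting) card_Un_disjoint disjoint_iff finite_signature_of_path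
        finite_subset mem_Collect_eq subsetI)
  then show ?thesis
    by (simp add: card_odd_signature_of_path card_even_signature_of_path)
qed

lemma signature_of_path_no_pair:
  "\<forall>j \<in> {1..n}. \<not> (2*j - 1 \<in> signature_of_path M \<and> 2*j \<in> signature_of_path M)"
proof
  fix j assume "j \<in> {1..n}"
  then have "2*j - 1 = 2*(j-1)+1" and "2*j = 2*(j-1)+2" by auto
  then show "\<not> (2*j - 1 \<in> signature_of_path M \<and> 2*j \<in> signature_of_path M)"
    by (simp only: odd_mem_signature_of_path even_mem_signature_of_path) auto
qed

lemma prefix_condition_iff:
  "(\<forall>i \<in> {1..2*n}. steps_before Dn M (i div 2) \<le> steps_before Up M (Suc i div 2)) \<longleftrightarrow>
   (\<forall>k \<le> n. steps_before Dn M k \<le> steps_before Up M k)"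
proof
  assume H: "\<forall>i \<in> {1..2*n}. steps_before Dn M (i div 2) \<le> steps_before Up M (Suc i div 2)"
  show "\<forall>k \<le> n. steps_before Dn M k \<le> steps_before Up M k"
  proof (intro allI impI)
    fix k assume "k \<le> n"
    show "steps_before Dn M k \<le> steps_before Up M k"
    proof (cases "k = 0")
      case False
      with \<open>k \<le> n\<close> have "2*k \<in> {1..2*n}" by auto
      with H have "steps_before Dn M (2*k div 2) \<le> steps_before Up M (Suc (2*k) div 2)"
        by blast
      moreover have "Suc (2*k) div 2 = k" by presburger
      ultimately show ?thesis by simp
    qed simp
  qed
next
  assume H: "\<forall>k \<le> n. steps_before Dn M k \<le> steps_before Up M k"
  show "\<forall>i \<in> {1..2*n}. steps_before Dn M (i div 2) \<le> steps_before Up M (Suc i div 2)"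
  proof
    fix i assume "i \<in> {1..2*n}"
    with H have "steps_before Dn M (i div 2) \<le> steps_before Up M (i div 2)" by auto
    also have "\<dots> \<le> steps_before Up M (Suc i div 2)"
      by (rule steps_before_mono) presburger
    finally show "steps_before Dn M (i div 2) \<le> steps_before Up M (Suc i div 2)" .
  qed
qed

lemma is_signature_signature_of_path_iff:
  assumes "length M = n"
  shows "is_signature n (signature_of_path M) \<longleftrightarrow> is_motzkin n M"
proof -
  have le_Suc: "{x \<in> S. P x \<and> x \<le> i} = {x \<in> S. P x \<and> x < Suc i}" for S P and i :: nat
    by auto
  have "is_signature n (signature_of_path M) \<longleftrightarrow>
        steps_before Up M n = steps_before Dn M n \<and>
        (\<forall>i \<in> {1..2*n}. steps_before Dn M (i div 2) \<le> steps_before Up M (Suc i div 2))"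
    unfolding is_signature_def le_Suc
    using signature_of_path_subset[of M] signature_of_path_no_pair[of n M] assms
    by (simp add: card_odd_signature_of_path card_even_signature_of_path
        card_odd_less_signature_of_path card_even_less_signature_of_path)
  also have "\<dots> \<longleftrightarrow> is_motzkin n M"
    unfolding is_motzkin_def height_eq_steps_before prefix_condition_iff using assms by auto
  finally show ?thesis .
qed

lemma length_path_of_signature [simp]: "length (path_of_signature n S) = n"
  by (simp add: path_of_signature_def)

lemma path_of_signature_of_path: "path_of_signature (length M) (signature_of_path M) = M"
proof (rule nth_equalityI)
  fix i assume "i < length (path_of_signature (length M) (signature_of_path M))"
  then show "path_of_signature (length M) (signature_of_path M) ! i = M ! i"
    by (cases "M!i") (simp_all add: path_of_signature_def)
qed simp

lemma signature_of_path_of_signature: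
  assumes "is_signature n S"
  shows "signature_of_path (path_of_signature n S) = S"
proof (rule set_eqI)
  fix x :: nat
  have sub: "S \<subseteq> {1..2*n}" and no_pair: "\<forall>j \<in> {1..n}. \<not> (2*j - 1 \<in> S \<and> 2*j \<in> S)"
    using assms by (auto simp: is_signature_def)
  consider j where "x = 2*j+1" | j where "x = 2*j+2" | "x = 0"
  proof (cases "odd x")
    case True
    then have "x = 2*(x div 2)+1" by presburger
    then show thesis using that(1) by blast
  next
    case False
    then have "x = 2*(x div 2 - 1)+2 \<or> x = 0" by presburger
    then show thesis using that(2,3) by blast
  qed
  then show "x \<in> signature_of_path (path_of_signature n S) \<longleftrightarrow> x \<in> S"
  proof cases
    case (1 j)
    then have "x \<in> S \<Longrightarrow> j < n" using sub by auto
    then show ?thesis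
      unfolding 1 odd_mem_signature_of_path by (auto simp: path_of_signature_def split: if_splits)
  next
    case (2 j)
    have "j < n \<and> 2*j+1 \<notin> S" if "x \<in> S"
    proof -
      have "j < n" using that sub 2 by auto
      moreover have "2*Suc j - 1 = 2*j+1" "2*Suc j = x" using 2 by auto
      ultimately show ?thesis using no_pair[rule_format, of "Suc j"] that by auto
    qed
    then show ?thesis
      unfolding 2 even_mem_signature_of_path by (auto simp: path_of_signature_def split: if_splits)
  next
    case 3
    then show ?thesis
      using sub signature_of_path_subset[of "path_of_signature n S"] by auto
  qed
qed

lemma sig_vec_signature_of_path_odd:
  "sig_vec (signature_of_path M) (2*j+1) = height M j + 1"
  by (simp add: sig_vec_def odd_below_def even_below_def height_eq_steps_before
      card_odd_less_signature_of_path card_even_less_signature_of_path)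

lemma sig_vec_signature_of_path_even:
  assumes "j < length M"
  shows "sig_vec (signature_of_path M) (2*j+2) =
         (case M!j of Up \<Rightarrow> height M j + 2 | Lvl \<Rightarrow> height M j + 1 | Dn \<Rightarrow> height M j)"
proof -
  have "(2*j+2-1) div 2 = j" by presburger
  then have "odd_below (signature_of_path M) (2*j+2) = int (steps_before Up M (Suc j))"
    and "even_below (signature_of_path M) (2*j+2) = int (steps_before Dn M j)"
    by (simp_all add: odd_below_def even_below_def
        card_odd_less_signature_of_path card_even_less_signature_of_path)
  then show ?thesis
    using assms by (cases "M!j")
      (simp_all add: sig_vec_def height_eq_steps_before steps_before_Suc)
qed

lemma prod_atLeastAtMost_pairs:
  fixes f :: "nat \<Rightarrow> 'a::comm_monoid_mult"
  shows "(\<Prod>i\<in>{1..2*m}. f i) = (\<Prod>j<m. f (2*j+1) * f (2*j+2))"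
proof (induction m)
  case (Suc m)
  have "{1..2 * Suc m} = {1..2*m} \<union> {2*m+1, 2*m+2}" by auto
  then show ?case
    using Suc.IH by (simp add: prod.union_disjoint mult_ac)
qed simp

lemma prod_smult_power:
  "finite A \<Longrightarrow> (\<Prod>k\<in>A. smult (c k) (p ^ e k)) = smult (\<Prod>k\<in>A. c k) (p ^ (\<Sum>k\<in>A. e k))"
  by (induction A rule: finite_induct)
    (simp_all add: power_add mult_smult_left mult_smult_right mult_ac)

fun step_coeff :: "int \<Rightarrow> step \<Rightarrow> int" where
  "step_coeff h Up = (h+1)*(h+2)"
| "step_coeff h Lvl = (h+1)^2"
| "step_coeff h Dn = (h+1)*h"

lemma step_weight_eq_smult:
  "step_weight h s = smult (step_coeff h s) (tvar ^ (if s = Up then 1 else 0))"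
  by (cases s) simp_all

lemma sig_weight_signature_of_path:
  assumes "is_motzkin n M"
  shows "sig_weight n (signature_of_path M) = rho M"
proof -
  have len: "length M = n" using assms by (simp add: is_motzkin_def)
  have balanced: "steps_before Up M n = steps_before Dn M n"
    using assms height_eq_steps_before[of M n] by (simp add: is_motzkin_def)
  have card: "card (signature_of_path M) div 2 = steps_before Up M n"
    using balanced len by (simp add: card_signature_of_path)
  have coeff: "(\<Prod>i\<in>{1..2*n}. sig_vec (signature_of_path M) i) = (\<Prod>k<n. step_coeff (height M k) (M!k))"
    unfolding prod_atLeastAtMost_pairs
  proof (rule prod.cong)
    fix k assume "k \<in> {..<n}"
    with len have k: "k < length M" by simp
    show "sig_vec (signature_of_path M) (2*k+1) * sig_vec (signature_of_path M) (2*k+2) =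
                   step_coeff (height M k) (M!k)"
      unfolding sig_vec_signature_of_path_odd sig_vec_signature_of_path_even[OF k]
      by (cases "M!k") (simp_all add: algebra_simps power2_eq_square)
  qed simp
  have ups: "(\<Sum>k<n. if M!k = Up then 1 else 0) = steps_before Up M n"
    unfolding sum_indicator_Up[symmetric] using len by (intro sum.cong) auto
  have "rho M = (\<Prod>k<n. smult (step_coeff (height M k) (M!k)) (tvar ^ (if M!k = Up then 1 else 0)))"
    unfolding rho_def len step_weight_eq_smult ..
  also have "\<dots> = smult (\<Prod>k<n. step_coeff (height M k) (M!k))
                         (tvar ^ (\<Sum>k<n. if M!k = Up then 1 else 0))"
    by (rule prod_smult_power) simp
  finally show ?thesis
    unfolding sig_weight_def coeff ups card by simp
qed

theorem mainTheorem4: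
  fixes n :: nat
  assumes "n \<ge> 1"
  shows "\<exists>\<phi>. bij_betw \<phi> {S. is_signature n S} {M. is_motzkin n M} \<and>
             (\<forall>S. is_signature n S \<longrightarrow> sig_weight n S = rho (\<phi> S))"
proof (intro exI conjI allI impI)
  have motzkin: "is_motzkin n (path_of_signature n S)" if "is_signature n S" for S
    using is_signature_signature_of_path_iff[of "path_of_signature n S" n]
      signature_of_path_of_signature[OF that] that by simp
  show "bij_betw (path_of_signature n) {S. is_signature n S} {M. is_motzkin n M}"
  proof (rule bij_betw_byWitness[where f' = signature_of_path])
    show "\<forall>M\<in>{M. is_motzkin n M}. path_of_signature n (signature_of_path M) = M"
      using path_of_signature_of_path by (auto simp: is_motzkin_def)
    show "signature_of_path ` {M. is_motzkin n M} \<subseteq> {S. is_signature n S}"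
      using is_signature_signature_of_path_iff by (auto simp: is_motzkin_def)
  qed (use signature_of_path_of_signature motzkin in auto)
  fix S assume "is_signature n S"
  then show "sig_weight n S = rho (path_of_signature n S)"
    using sig_weight_signature_of_path[OF motzkin] signature_of_path_of_signature by metis
qed

end
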